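(* Let $k\ge 1$ be an integer. Every $4k$-edge-connected graph contains $k$ pairwise edge-disjoint $(2,2)$-tight spanning subgraphs.
   Context: A connected graph is $m$-edge-connected if it remains connected after the removal of any $m-1$ edges. Graphs are finite and simple. A graph $G$ is $(2,2)$-sparse if $|E(H)|\le\max\{2|V(H)|-2,0\}$ for every subgraph $H$ of $G$, and $(2,2)$-tight if moreover $|E(G)|=2|V(G)|-2$. *)

theory Defs
  imports Main
begin

definition simple_graph :: "'a set \<Rightarrow> 'a set set \<Rightarrow> bool" where
  "simple_graph V E \<longleftrightarrow> finite V \<and> (\<forall>e\<in>E. \<exists>u v. e = {u, v} \<and> u \<in> V \<and> v \<in> V \<and> u \<noteq> v)"

definition connected_graph :: "'a set \<Rightarrow> 'a set set \<Rightarrow> bool" where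
  "connected_graph V E \<longleftrightarrow> V \<noteq> {} \<and>
     (\<forall>u\<in>V. \<forall>v\<in>V. (\<lambda>x y. {x, y} \<in> E)\<^sup>*\<^sup>* u v)"

definition edge_connected :: "nat \<Rightarrow> 'a set \<Rightarrow> 'a set set \<Rightarrow> bool" where
  "edge_connected m V E \<longleftrightarrow> connected_graph V E \<and>
     (\<forall>F. F \<subseteq> E \<and> card F < m \<longrightarrow> connected_graph V (E - F))"

definition sparse22 :: "'a set \<Rightarrow> 'a set set \<Rightarrow> bool" where
  "sparse22 V E \<longleftrightarrow> (\<forall>W F'. W \<subseteq> V \<and> F' \<subseteq> E \<and> (\<forall>e\<in>F'. e \<subseteq> W) \<longrightarrow>
       int (card F') \<le> max (2 * int (card W) - 2) 0)"

definition tight22 :: "'a set \<Rightarrow> 'a set set \<Rightarrow> bool" where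
  "tight22 V E \<longleftrightarrow> sparse22 V E \<and> int (card E) = 2 * int (card V) - 2"

end

theory Submission
  imports Defs
begin

text \<open>Two edge-disjoint spanning trees form a \<open>(2,2)\<close>-tight graph, because a forest has fewer
  edges than vertices on every nonempty vertex set. So it suffices to find \<open>2k\<close> edge-disjoint
  spanning trees in a \<open>4k\<close>-edge-connected graph, which is the Nash-Williams--Tutte theorem.
  We prove the needed direction through the matroid union argument for the forest matroid:
  a packing of \<open>K\<close> disjoint forests of maximum total size, analysed through exchange sequences,
  yields an edge set \<open>A\<close> and a forest \<open>J\<close> spanning it with \<open>|E - A| + K |J|\<close> at most the size of
  the packing. Each component of \<open>J\<close> has at least \<open>2K\<close> cut edges, all outside \<open>A\<close>, whence
  \<open>K (|V| - 1) \<le> |E - A| + K |J|\<close>, and every forest of the packing is a spanning tree.\<close>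

section \<open>Packings of independent sets in a matroid\<close>

locale matroid =
  fixes ground :: "'e set" and indep :: "'e set \<Rightarrow> bool"
  assumes finite_ground: "finite ground"
    and indep_subset_ground: "indep X \<Longrightarrow> X \<subseteq> ground"
    and indep_subset: "indep X \<Longrightarrow> Y \<subseteq> X \<Longrightarrow> indep Y"
    and indep_augment: "indep X \<Longrightarrow> indep Y \<Longrightarrow> card X < card Y \<Longrightarrow> \<exists>e\<in>Y - X. indep (insert e X)"
    and indep_empty: "indep {}"
begin

definition spans :: "'e set \<Rightarrow> 'e \<Rightarrow> bool" where
  "spans I x \<longleftrightarrow> x \<in> I \<or> \<not> indep (insert x I)"

lemma indep_finite: "indep X \<Longrightarrow> finite X"
  using indep_subset_ground finite_ground finite_subset by blast

lemma indep_extend_within: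
  assumes "indep I" "I \<subseteq> U" "indep J" "J \<subseteq> U"
  shows "\<exists>K. indep K \<and> I \<subseteq> K \<and> K \<subseteq> U \<and> card J \<le> card K"
proof -
  let ?P = "\<lambda>K. indep K \<and> I \<subseteq> K \<and> K \<subseteq> U"
  have "\<forall>K. ?P K \<longrightarrow> card K < card ground + 1"
    using indep_subset_ground finite_ground by (simp add: card_mono less_Suc_eq_le)
  then obtain K where K: "?P K" "\<forall>K'. ?P K' \<longrightarrow> card K' \<le> card K"
    using ex_has_greatest_nat[of ?P I card "card ground + 1"] assms by blast
  show ?thesis
  proof (cases "card J \<le> card K")
    case True
    then show ?thesis using K by blast
  next
    case False
    then obtain e where e: "e \<in> J - K" "indep (insert e K)"
      using indep_augment[of K J] K assms by auto
    then have "?P (insert e K)" using K assms by auto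
    then have "card (insert e K) \<le> card K" using K by blast
    moreover have "card (insert e K) = card K + 1"
      using e indep_finite K by simp
    ultimately show ?thesis by simp
  qed
qed

lemma spans_trans:
  assumes "indep I" "indep I'" "\<forall>x\<in>I'. spans I x" "spans I' e"
  shows "spans I e"
proof (rule ccontr)
  assume ne: "\<not> spans I e"
  then have eI: "e \<notin> I" "indep (insert e I)" unfolding spans_def by auto
  have "e \<notin> I'" using assms(3) ne by blast
  then have dep: "\<not> indep (insert e I')" using assms(4) unfolding spans_def by auto
  obtain K where K: "indep K" "I' \<subseteq> K" "K \<subseteq> I' \<union> insert e I" "card (insert e I) \<le> card K"
    using indep_extend_within[of I' "I' \<union> insert e I" "insert e I"] assms eI by auto
  have "e \<notin> K" using K dep indep_subset by blast
  then have KI: "K \<subseteq> I' \<union> I" using K by auto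
  have "card I < card K" using K eI indep_finite assms by simp
  then obtain x where x: "x \<in> K - I" "indep (insert x I)"
    using indep_augment[of I K] assms K by auto
  then have "x \<in> I'" using KI by auto
  then show False using assms(3) x unfolding spans_def by auto
qed

lemma spans_card_le:
  assumes "indep I" "indep J" "\<forall>x\<in>J. spans I x"
  shows "card J \<le> card I"
proof (rule ccontr)
  assume "\<not> card J \<le> card I"
  then obtain x where "x \<in> J - I" "indep (insert x I)"
    using indep_augment[of I J] assms by auto
  then show False using assms(3) unfolding spans_def by auto
qed

text \<open>The exchangeable elements contain the fundamental circuit of \<open>e\<close> in \<open>F\<close>.\<close>

lemma exchangeable_insert_dependent:
  assumes "indep F" "e \<notin> F" "\<not> indep (insert e F)"
  shows "\<not> indep (insert e {f\<in>F. indep (insert e (F - {f}))})"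
proof
  let ?C = "{f\<in>F. indep (insert e (F - {f}))}"
  assume ind: "indep (insert e ?C)"
  obtain K where K: "indep K" "insert e ?C \<subseteq> K" "K \<subseteq> insert e F" "card F \<le> card K"
    using indep_extend_within[of "insert e ?C" "insert e F" F] ind assms by auto
  have "K \<noteq> insert e F" using K assms by auto
  then obtain f where f: "f \<in> F" "f \<notin> K" using K by auto
  have sub: "K \<subseteq> insert e (F - {f})" using K f by auto
  have fin: "finite (insert e (F - {f}))" using indep_finite assms by auto
  have "card (insert e (F - {f})) = card F"
  proof -
    have "finite F" using indep_finite assms by auto
    then have "card F > 0" using f card_gt_0_iff by blast
    then show ?thesis using f assms \<open>finite F\<close> by (simp add: card_Diff_singleton)
  qed
  then have "K = insert e (F - {f})"
    using card_subset_eq[OF fin sub] K by (metis card_mono fin le_antisym sub)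
  then have "f \<in> ?C" using K f by auto
  then show False using K f by auto
qed

definition packing :: "nat \<Rightarrow> (nat \<Rightarrow> 'e set) \<Rightarrow> bool" where
  "packing K T \<longleftrightarrow> (\<forall>i<K. indep (T i)) \<and> (\<forall>i<K. \<forall>j<K. i \<noteq> j \<longrightarrow> T i \<inter> T j = {})"

definition packing_size :: "nat \<Rightarrow> (nat \<Rightarrow> 'e set) \<Rightarrow> nat" where
  "packing_size K T = (\<Sum>i<K. card (T i))"

definition uncovered :: "nat \<Rightarrow> (nat \<Rightarrow> 'e set) \<Rightarrow> 'e set" where
  "uncovered K T = ground - (\<Union>i<K. T i)"

definition exchange :: "nat \<Rightarrow> (nat \<Rightarrow> 'e set) \<Rightarrow> (nat \<Rightarrow> 'e set) \<Rightarrow> bool" where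
  "exchange K T T' \<longleftrightarrow> (\<exists>i<K. \<exists>e f. e \<in> uncovered K T \<and> f \<in> T i \<and>
     indep (insert e (T i - {f})) \<and> T' = T(i := insert e (T i - {f})))"

lemma packing_size_less:
  assumes "packing K T"
  shows "packing_size K T < K * card ground + 1"
proof -
  have "card (T i) \<le> card ground" if "i < K" for i
    using assms that indep_subset_ground finite_ground by (auto simp: packing_def intro!: card_mono)
  then have "packing_size K T \<le> (\<Sum>i<K. card ground)"
    unfolding packing_size_def by (intro sum_mono) auto
  then show ?thesis by simp
qed

lemma packing_size_update:
  assumes "i < K"
  shows "packing_size K (T(i := X)) + card (T i) = packing_size K T + card X"
proof -
  have "(\<Sum>j\<in>{..<K}-{i}. card ((T(i := X)) j)) = (\<Sum>j\<in>{..<K}-{i}. card (T j))"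
    by (rule sum.cong) auto
  then have "packing_size K (T(i := X)) = (\<Sum>j\<in>{..<K}-{i}. card (T j)) + card X"
    unfolding packing_size_def using assms sum.remove[of "{..<K}" i "\<lambda>j. card ((T(i := X)) j)"]
    by simp
  moreover have "packing_size K T = (\<Sum>j\<in>{..<K}-{i}. card (T j)) + card (T i)"
    unfolding packing_size_def using assms sum.remove[of "{..<K}" i "\<lambda>j. card (T j)"] by simp
  ultimately show ?thesis by simp
qed

lemma exchange_packing:
  assumes "packing K T" "exchange K T T'"
  shows "packing K T' \<and> packing_size K T' = packing_size K T"
proof -
  obtain i e f where st: "i < K" "e \<in> uncovered K T" "f \<in> T i" "indep (insert e (T i - {f}))"
    "T' = T(i := insert e (T i - {f}))" using assms(2) unfolding exchange_def by blast
  have eT: "\<forall>j<K. e \<notin> T j" using st(2) unfolding uncovered_def by auto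
  have "packing K T'"
    unfolding packing_def
  proof (intro conjI allI impI)
    fix a assume "a < K"
    then show "indep (T' a)" using assms(1) st unfolding packing_def by auto
  next
    fix a b assume ab: "a < K" "b < K" "a \<noteq> b"
    have "T a \<inter> T b = {}" using assms(1) ab unfolding packing_def by auto
    then show "T' a \<inter> T' b = {}"
      using ab eT st(5) by (cases "a = i"; cases "b = i") auto
  qed
  moreover have "finite (T i)" using assms(1) st(1) indep_finite packing_def by auto
  then have "card (insert e (T i - {f})) = card (T i)"
    using st eT card_gt_0_iff[of "T i"] by (auto simp: card_Diff_singleton)
  then have "packing_size K T' = packing_size K T"
    using packing_size_update[OF st(1), of T "insert e (T i - {f})"] st by simp
  ultimately show ?thesis by blast
qed

end

locale maximum_packing = matroid ground indep for ground :: "'e set" and indep +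
  fixes K :: nat and T0 :: "nat \<Rightarrow> 'e set"
  assumes packing_T0: "packing K T0"
    and packing_size_maximal: "packing K T \<Longrightarrow> packing_size K T \<le> packing_size K T0"
begin

abbreviation reachable :: "(nat \<Rightarrow> 'e set) \<Rightarrow> bool" where
  "reachable \<equiv> (exchange K)\<^sup>*\<^sup>* T0"

lemma reachable_maximum_packing:
  assumes "reachable T"
  shows "packing K T \<and> packing_size K T = packing_size K T0"
  using assms
proof (induction rule: rtranclp_induct)
  case base
  then show ?case using packing_T0 by simp
next
  case (step T T')
  then show ?case using exchange_packing by auto
qed

lemma reachable_insert_uncovered_dependent:
  assumes "reachable T" "e \<in> uncovered K T" "i < K"
  shows "\<not> indep (insert e (T i))"
proof
  assume ind: "indep (insert e (T i))"
  have T: "packing K T" "packing_size K T = packing_size K T0"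
    using reachable_maximum_packing[OF assms(1)] by auto
  have eT: "\<forall>j<K. e \<notin> T j" using assms(2) unfolding uncovered_def by auto
  have "packing K (T(i := insert e (T i)))"
    using T(1) ind eT unfolding packing_def by auto
  then have "packing_size K (T(i := insert e (T i))) \<le> packing_size K T0"
    by (rule packing_size_maximal)
  moreover have "card (insert e (T i)) = card (T i) + 1"
    using T(1) assms(3) eT indep_finite unfolding packing_def by auto
  ultimately show False
    using packing_size_update[OF assms(3), of T "insert e (T i)"] T(2) by simp
qed

text \<open>The crux of the matroid union argument: every \<open>T0 i\<close> restricted to this set spans it.\<close>

definition exchangeable :: "'e set" where
  "exchangeable = {e. \<exists>T. reachable T \<and> e \<in> uncovered K T}"

lemma exchangeable_subset_ground: "exchangeable \<subseteq> ground"
  unfolding exchangeable_def uncovered_def by auto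

lemma spans_uncovered:
  assumes "reachable T" "e \<in> uncovered K T" "i < K"
  shows "spans (T i \<inter> exchangeable) e"
proof -
  have T: "packing K T" using reachable_maximum_packing[OF assms(1)] by auto
  have indT: "indep (T i)" using T assms(3) packing_def by auto
  have eT: "\<forall>j<K. e \<notin> T j" using assms(2) unfolding uncovered_def by auto
  let ?C = "{f\<in>T i. indep (insert e (T i - {f}))}"
  have "f \<in> exchangeable" if f: "f \<in> ?C" for f
  proof -
    let ?T' = "T(i := insert e (T i - {f}))"
    have "f \<notin> T j" if "j < K" "j \<noteq> i" for j
      using f T assms(3) that unfolding packing_def by blast
    then have "f \<in> uncovered K ?T'"
      using f eT indep_subset_ground[OF indT] unfolding uncovered_def by auto
    moreover have "exchange K T ?T'"
      unfolding exchange_def using assms(2,3) f by blast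
    then have "reachable ?T'" using assms(1) by simp
    ultimately show ?thesis unfolding exchangeable_def by blast
  qed
  moreover have "\<not> indep (insert e ?C)"
    using exchangeable_insert_dependent indT eT assms reachable_insert_uncovered_dependent by blast
  ultimately have "\<not> indep (insert e (T i \<inter> exchangeable))"
    using indep_subset[of "insert e (T i \<inter> exchangeable)" "insert e ?C"] by blast
  then show ?thesis unfolding spans_def by auto
qed

lemma spans_exchange_back:
  assumes "reachable T" "exchange K T T'" "i < K" "spans (T' i \<inter> exchangeable) x"
  shows "spans (T i \<inter> exchangeable) x"
proof -
  obtain j e f where st: "j < K" "e \<in> uncovered K T" "f \<in> T j" "indep (insert e (T j - {f}))"
    "T' = T(j := insert e (T j - {f}))" using assms(2) unfolding exchange_def by blast
  show ?thesis
  proof (cases "j = i")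
    case False
    then show ?thesis using assms(4) st by simp
  next
    case True
    have "indep (T i)"
      using reachable_maximum_packing[OF assms(1)] assms(3) packing_def by auto
    then have "indep (T i \<inter> exchangeable)" using indep_subset by blast
    moreover have "indep (T' i \<inter> exchangeable)" using st True indep_subset by auto
    moreover have "spans (T i \<inter> exchangeable) e" using spans_uncovered assms(1,3) st(2) by blast
    then have "\<forall>y\<in>T' i \<inter> exchangeable. spans (T i \<inter> exchangeable) y"
      using st True by (auto simp: spans_def)
    ultimately show ?thesis using spans_trans assms(4) by blast
  qed
qed

lemma spans_reachable_back:
  assumes "reachable T" "i < K" "spans (T i \<inter> exchangeable) x"
  shows "spans (T0 i \<inter> exchangeable) x"
  using assms
proof (induction arbitrary: x rule: rtranclp_induct)
  case base
  then show ?case by simp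
next
  case (step T T')
  then show ?case using spans_exchange_back by blast
qed

lemma spans_exchangeable:
  assumes "e \<in> exchangeable" "i < K"
  shows "spans (T0 i \<inter> exchangeable) e"
  using assms spans_uncovered spans_reachable_back unfolding exchangeable_def by blast

lemma packing_size_ge:
  assumes "i < K"
  shows "card (ground - exchangeable) + K * card (T0 i \<inter> exchangeable) \<le> packing_size K T0"
proof -
  let ?S = "exchangeable" and ?J = "T0 i \<inter> exchangeable"
  have indep_T0: "indep (T0 j)" if "j < K" for j
    using packing_T0 that packing_def by auto
  have finT: "finite (T0 j)" if "j < K" for j using indep_T0 that indep_finite by blast
  have "card ?J \<le> card (T0 j \<inter> ?S)" if "j < K" for j
    using spans_card_le[of "T0 j \<inter> ?S" ?J] indep_T0 that assms indep_subset spans_exchangeable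
    by (metis Int_iff inf_le1)
  then have "K * card ?J \<le> (\<Sum>j<K. card (T0 j \<inter> ?S))"
    using sum_mono[of "{..<K}" "\<lambda>_. card ?J"] by simp
  moreover have "card (ground - ?S) \<le> (\<Sum>j<K. card (T0 j - ?S))"
  proof -
    have "ground - ?S \<subseteq> (\<Union>j<K. T0 j - ?S)"
      using reachable_maximum_packing[of T0] unfolding exchangeable_def uncovered_def by blast
    then have "card (ground - ?S) \<le> card (\<Union>j<K. T0 j - ?S)"
      using finT by (intro card_mono) auto
    also have "\<dots> = (\<Sum>j<K. card (T0 j - ?S))"
    proof (rule card_UN_disjoint)
      show "\<forall>j\<in>{..<K}. \<forall>j'\<in>{..<K}. j \<noteq> j' \<longrightarrow> (T0 j - ?S) \<inter> (T0 j' - ?S) = {}"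
        using packing_T0 unfolding packing_def by blast
    qed (use finT in auto)
    finally show ?thesis .
  qed
  moreover have "packing_size K T0 = (\<Sum>j<K. card (T0 j \<inter> ?S)) + (\<Sum>j<K. card (T0 j - ?S))"
    unfolding packing_size_def sum.distrib[symmetric]
    by (rule sum.cong) (auto intro!: card_Int_Diff finT)
  ultimately show ?thesis by linarith
qed

end

lemma (in matroid) packing_spanning_certificate:
  assumes "K \<ge> 1"
  shows "\<exists>T A J. packing K T \<and> A \<subseteq> ground \<and> indep J \<and> (\<forall>e\<in>A. spans J e) \<and>
           card (ground - A) + K * card J \<le> packing_size K T"
proof -
  have "packing K (\<lambda>_. {})" using indep_empty by (simp add: packing_def)
  moreover have "\<forall>T. packing K T \<longrightarrow> packing_size K T < K * card ground + 1"
    using packing_size_less by blast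
  ultimately obtain T0 where T0: "packing K T0" "\<forall>T. packing K T \<longrightarrow> packing_size K T \<le> packing_size K T0"
    using ex_has_greatest_nat[of "packing K" "\<lambda>_. {}" "packing_size K" "K * card ground + 1"]
    by blast
  interpret maximum_packing ground indep K T0
    using T0 by unfold_locales auto
  have "0 < K" using assms by simp
  then have "indep (T0 0 \<inter> exchangeable)"
    using packing_T0 indep_subset unfolding packing_def by blast
  moreover have "\<forall>e\<in>exchangeable. spans (T0 0 \<inter> exchangeable) e"
    using spans_exchangeable \<open>0 < K\<close> by blast
  ultimately show ?thesis
    using packing_T0 exchangeable_subset_ground packing_size_ge[OF \<open>0 < K\<close>] by blast
qed

section \<open>Components, forests and edge cuts\<close>

definition connected_by :: "'a set set \<Rightarrow> 'a \<Rightarrow> 'a \<Rightarrow> bool" where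
  "connected_by X = (\<lambda>x y. {x, y} \<in> X)\<^sup>*\<^sup>*"

definition component :: "'a set \<Rightarrow> 'a set set \<Rightarrow> 'a \<Rightarrow> 'a set" where
  "component V X v = {u\<in>V. connected_by X v u}"

definition num_components :: "'a set \<Rightarrow> 'a set set \<Rightarrow> nat" where
  "num_components V X = card (component V X ` V)"

text \<open>Acyclicity is encoded by counting: every edge of a forest joins two components.\<close>

definition forest :: "'a set \<Rightarrow> 'a set set \<Rightarrow> 'a set set \<Rightarrow> bool" where
  "forest V E X \<longleftrightarrow> X \<subseteq> E \<and> num_components V X + card X = card V"

lemma connected_by_refl: "connected_by X u u"
  unfolding connected_by_def by simp

lemma connected_by_edge: "{a, b} \<in> X \<Longrightarrow> connected_by X a b"
  unfolding connected_by_def by auto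

lemma connected_by_trans: "connected_by X u v \<Longrightarrow> connected_by X v w \<Longrightarrow> connected_by X u w"
  unfolding connected_by_def by (rule rtranclp_trans)

lemma connected_by_sym: "connected_by X u v \<Longrightarrow> connected_by X v u"
  unfolding connected_by_def
proof (induction rule: rtranclp_induct)
  case base
  then show ?case by simp
next
  case (step y z)
  then have "{z, y} \<in> X" by (simp add: insert_commute)
  then show ?case using step.IH by (meson converse_rtranclp_into_rtranclp)
qed

lemma connected_by_subst:
  assumes "connected_by X u v" "\<And>a b. {a, b} \<in> X \<Longrightarrow> connected_by Y a b"
  shows "connected_by Y u v"
  using assms unfolding connected_by_def
proof (induction rule: rtranclp_induct)
  case base
  then show ?case by simp
next
  case (step y z)
  have "(\<lambda>x y. {x, y} \<in> Y)\<^sup>*\<^sup>* y z" using step.hyps(2) step.prems by blast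
  then show ?case using step.IH step.prems by (meson rtranclp_trans)
qed

lemma connected_by_mono: "connected_by X u v \<Longrightarrow> X \<subseteq> Y \<Longrightarrow> connected_by Y u v"
  by (erule connected_by_subst) (auto intro: connected_by_edge)

lemma connected_by_insert:
  assumes "connected_by (insert {a, b} X) u v"
  shows "connected_by X u v \<or> (connected_by X u a \<and> connected_by X b v) \<or>
    (connected_by X u b \<and> connected_by X a v)"
  using assms unfolding connected_by_def
proof (induction rule: rtranclp_induct)
  case base
  then show ?case by simp
next
  case (step y z)
  let ?R = "(\<lambda>x y. {x, y} \<in> X)\<^sup>*\<^sup>*"
  show ?case
  proof (cases "?R y z")
    case True
    then show ?thesis using step.IH by (meson rtranclp_trans)
  next
    case False
    then have "(y = a \<and> z = b) \<or> (y = b \<and> z = a)"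
      using step.hyps(2) by (auto simp: doubleton_eq_iff)
    then show ?thesis
    proof
      assume "y = a \<and> z = b"
      then show ?thesis using step.IH by auto
    next
      assume "y = b \<and> z = a"
      then show ?thesis using step.IH by auto
    qed
  qed
qed

lemma connected_by_crossing_edge:
  assumes "connected_by X v w" "v \<in> C" "w \<notin> C"
  shows "\<exists>a b. {a, b} \<in> X \<and> a \<in> C \<and> b \<notin> C"
proof -
  have "w \<notin> C \<longrightarrow> (\<exists>a b. {a, b} \<in> X \<and> a \<in> C \<and> b \<notin> C)"
    using assms(1) unfolding connected_by_def
  proof (induction rule: rtranclp_induct)
    case base
    then show ?case using assms(2) by simp
  next
    case (step y z)
    show ?case
    proof (cases "y \<in> C")
      case True
      then show ?thesis using step.hyps(2) by blast
    next
      case False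
      then show ?thesis using step.IH by blast
    qed
  qed
  then show ?thesis using assms(3) by blast
qed

lemma mem_component: "v \<in> V \<Longrightarrow> v \<in> component V X v"
  unfolding component_def using connected_by_refl by auto

lemma component_eq_iff:
  assumes "u \<in> V" "v \<in> V"
  shows "component V X u = component V X v \<longleftrightarrow> connected_by X u v"
proof
  assume "component V X u = component V X v"
  then have "v \<in> component V X u" using mem_component[OF assms(2)] by simp
  then show "connected_by X u v" unfolding component_def by simp
next
  assume r: "connected_by X u v"
  have "connected_by X u w \<longleftrightarrow> connected_by X v w" for w
    using connected_by_trans[OF r, of w] connected_by_trans[OF connected_by_sym[OF r], of w] by blast
  then show "component V X u = component V X v"
    unfolding component_def by simp
qed

lemma pairwise_disjnt_components: "pairwise disjnt (component V X ` V)"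
proof (rule pairwiseI)
  fix C D assume "C \<in> component V X ` V" "D \<in> component V X ` V" "C \<noteq> D"
  then obtain u v where uv: "u \<in> V" "v \<in> V" "C = component V X u" "D = component V X v"
    by blast
  then have not_uv: "\<not> connected_by X u v"
    using component_eq_iff[OF uv(1,2)] uv(3,4) \<open>C \<noteq> D\<close> by simp
  show "disjnt C D"
    unfolding disjnt_iff
  proof (intro allI notI)
    fix w assume "w \<in> C \<and> w \<in> D"
    then have uw: "connected_by X u w" and vw: "connected_by X v w"
      using uv unfolding component_def by auto
    show False using connected_by_trans[OF uw connected_by_sym[OF vw]] not_uv by contradiction
  qed
qed

lemma card_image_le_if_factors:
  assumes "finite V" "\<And>u v. u \<in> V \<Longrightarrow> v \<in> V \<Longrightarrow> h u = h v \<Longrightarrow> f u = f v"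
  shows "card (f ` V) \<le> card (h ` V)"
proof -
  have "f v = (f \<circ> inv_into V h \<circ> h) v" if "v \<in> V" for v
  proof -
    have "inv_into V h (h v) \<in> V" "h (inv_into V h (h v)) = h v"
      using inv_into_into[OF imageI[OF that]] f_inv_into_f[OF imageI[OF that]] .
    then show ?thesis using assms(2)[OF _ that] by simp
  qed
  then have "f ` V = (f \<circ> inv_into V h) ` h ` V"
    unfolding image_comp by (rule image_cong[OF refl])
  then show ?thesis using assms(1) by (simp add: card_image_le)
qed

definition edge_cut :: "'a set set \<Rightarrow> 'a set \<Rightarrow> 'a set set" where
  "edge_cut D C = {e\<in>D. \<exists>a b. e = {a, b} \<and> a \<in> C \<and> b \<notin> C}"

lemma edge_cut_subset: "edge_cut D C \<subseteq> D"
  unfolding edge_cut_def by blast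

lemma edge_connected_le_card_edge_cut:
  assumes "edge_connected m V E" "v \<in> V" "v \<in> C" "w \<in> V" "w \<notin> C"
  shows "m \<le> card (edge_cut E C)"
proof (rule ccontr)
  assume "\<not> m \<le> card (edge_cut E C)"
  then have "edge_cut E C \<subseteq> E \<and> card (edge_cut E C) < m" using edge_cut_subset by simp
  moreover have "\<forall>F. F \<subseteq> E \<and> card F < m \<longrightarrow> connected_graph V (E - F)"
    using assms(1) unfolding edge_connected_def by simp
  ultimately have "connected_graph V (E - edge_cut E C)" by simp
  then have "connected_by (E - edge_cut E C) v w"
    using assms(2,4) unfolding connected_graph_def connected_by_def by simp
  then obtain a b where ab: "{a, b} \<in> E - edge_cut E C" "a \<in> C" "b \<notin> C"
    using connected_by_crossing_edge[OF _ assms(3,5)] by blast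
  then have "{a, b} \<in> edge_cut E C" unfolding edge_cut_def by blast
  then show False using ab(1) by blast
qed

lemma card_members_le_one:
  assumes "finite \<C>" "pairwise disjnt \<C>"
  shows "card (\<C> \<inter> {C. a \<in> C}) \<le> 1"
proof -
  have "C = C'" if "C \<in> \<C>" "C' \<in> \<C>" "a \<in> C" "a \<in> C'" for C C'
    using assms(2) that unfolding pairwise_def disjnt_def by blast
  then show ?thesis using assms(1) card_le_Suc0_iff_eq[of "\<C> \<inter> {C. a \<in> C}"] by auto
qed

lemma sum_card_edge_cut_le:
  assumes "finite \<C>" "pairwise disjnt \<C>" "finite D"
  shows "(\<Sum>C\<in>\<C>. card (edge_cut D C)) \<le> 2 * card D"
proof -
  have crossing_le_2: "card (\<C> \<inter> {C. e \<in> edge_cut D C}) \<le> 2" for e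
  proof (cases "\<exists>C\<in>\<C>. e \<in> edge_cut D C")
    case False
    then have "\<C> \<inter> {C. e \<in> edge_cut D C} = {}" by blast
    then show ?thesis by simp
  next
    case True
    then obtain a b where "e = {a, b}" unfolding edge_cut_def by blast
    then have "\<C> \<inter> {C. e \<in> edge_cut D C} \<subseteq> (\<C> \<inter> {C. a \<in> C}) \<union> (\<C> \<inter> {C. b \<in> C})"
      unfolding edge_cut_def by (auto simp: doubleton_eq_iff)
    then have "card (\<C> \<inter> {C. e \<in> edge_cut D C}) \<le> card ((\<C> \<inter> {C. a \<in> C}) \<union> (\<C> \<inter> {C. b \<in> C}))"
      using assms(1) by (intro card_mono) auto
    also have "\<dots> \<le> card (\<C> \<inter> {C. a \<in> C}) + card (\<C> \<inter> {C. b \<in> C})"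
      by (rule card_Un_le)
    also have "\<dots> \<le> 2"
      using card_members_le_one[OF assms(1,2), of a] card_members_le_one[OF assms(1,2), of b] by linarith
    finally show ?thesis .
  qed
  have "(\<Sum>C\<in>\<C>. card (edge_cut D C)) = (\<Sum>C\<in>\<C>. \<Sum>e\<in>D. of_bool (e \<in> edge_cut D C))"
    using assms(3) by (simp add: Int_absorb1[OF edge_cut_subset])
  also have "\<dots> = (\<Sum>e\<in>D. \<Sum>C\<in>\<C>. of_bool (e \<in> edge_cut D C))"
    by (rule sum.swap)
  also have "\<dots> = (\<Sum>e\<in>D. card (\<C> \<inter> {C. e \<in> edge_cut D C}))"
    using assms(1) by simp
  also have "\<dots> \<le> (\<Sum>e\<in>D. 2)"
    by (rule sum_mono) (rule crossing_le_2)
  finally show ?thesis by simp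
qed

section \<open>The forest matroid and spanning tree packing\<close>

context
  fixes V :: "'a set" and E :: "'a set set"
  assumes simple: "simple_graph V E"
begin

lemma finite_vertices: "finite V"
  using simple unfolding simple_graph_def by blast

lemma edgeE:
  assumes "e \<in> E"
  obtains a b where "e = {a, b}" "a \<in> V" "b \<in> V" "a \<noteq> b"
  using simple assms unfolding simple_graph_def by blast

lemma edge_endpoints:
  assumes "{a, b} \<in> E"
  shows "a \<in> V" "b \<in> V"
proof -
  obtain x y where "{a, b} = {x, y}" "x \<in> V" "y \<in> V" using edgeE[OF assms] by metis
  then show "a \<in> V" "b \<in> V" by (auto simp: doubleton_eq_iff)
qed

lemma finite_edges: "finite E"
proof -
  have "e \<in> Pow V" if "e \<in> E" for e using edgeE[OF that] by blast
  then have "E \<subseteq> Pow V" by blast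
  then show ?thesis using finite_vertices finite_subset by blast
qed

lemma num_components_empty: "num_components V {} = card V"
proof -
  have "component V {} v = {v}" if "v \<in> V" for v
    using that unfolding component_def connected_by_def by (auto elim: converse_rtranclpE)
  then have "component V {} ` V = (\<lambda>v. {v}) ` V" by auto
  then show ?thesis unfolding num_components_def by (simp add: card_image)
qed

lemma num_components_pos: "V \<noteq> {} \<Longrightarrow> num_components V X \<ge> 1"
  unfolding num_components_def using finite_vertices by (simp add: Suc_le_eq card_gt_0_iff)

lemma num_components_insert_ge:
  assumes "a \<in> V" "b \<in> V"
  shows "num_components V X \<le> num_components V (insert {a, b} X) + 1"
proof -
  let ?f = "component V X" and ?h = "component V (insert {a, b} X)"
  define V' where "V' = {v\<in>V. ?f v \<noteq> ?f a}"
  have "?f u = ?f v" if "u \<in> V'" "v \<in> V'" "?h u = ?h v" for u v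
  proof -
    have uv: "u \<in> V" "v \<in> V" "?f u \<noteq> ?f a" "?f v \<noteq> ?f a" using that V'_def by auto
    have "connected_by (insert {a, b} X) u v" using component_eq_iff[of u V v] uv that(3) by auto
    then have "connected_by X u v \<or> (connected_by X u a \<and> connected_by X b v) \<or>
      (connected_by X u b \<and> connected_by X a v)"
      by (rule connected_by_insert)
    moreover have "\<not> connected_by X u a" using component_eq_iff[of u V a] uv assms by auto
    moreover have "\<not> connected_by X a v" using component_eq_iff[of a V v] uv assms by auto
    ultimately show ?thesis using component_eq_iff[of u V v] uv by auto
  qed
  then have "card (?f ` V') \<le> card (?h ` V')"
    using finite_vertices V'_def by (intro card_image_le_if_factors) auto
  also have "\<dots> \<le> card (?h ` V)" using finite_vertices V'_def by (intro card_mono) auto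
  finally have "card (?f ` V') \<le> num_components V (insert {a, b} X)"
    unfolding num_components_def .
  have "?f ` V \<subseteq> insert (?f a) (?f ` V')" unfolding V'_def by auto
  then have "num_components V X \<le> card (insert (?f a) (?f ` V'))"
    unfolding num_components_def using finite_vertices V'_def by (intro card_mono) auto
  also have "\<dots> \<le> card (?f ` V') + 1" by (simp add: card_insert_le_m1)
  finally show ?thesis using \<open>card (?f ` V') \<le> num_components V (insert {a, b} X)\<close> by linarith
qed

lemma num_components_insert_less:
  assumes "a \<in> V" "b \<in> V" "\<not> connected_by X a b"
  shows "num_components V (insert {a, b} X) < num_components V X"
proof -
  let ?f = "component V X" and ?h = "component V (insert {a, b} X)"
  define \<phi> where "\<phi> = ?h \<circ> inv_into V ?f"
  have "?h u = ?h v" if "u \<in> V" "v \<in> V" "?f u = ?f v" for u v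
    using that component_eq_iff[of u V v] connected_by_mono[of X u v "insert {a, b} X"] by auto
  then have h_factor: "?h v = \<phi> (?f v)" if "v \<in> V" for v
    using that inv_into_into[OF imageI[OF that]] f_inv_into_f[OF imageI[OF that]]
    unfolding \<phi>_def by (metis comp_apply)
  then have "?h ` V = \<phi> ` ?f ` V" by (auto simp: image_iff)
  moreover have "\<not> inj_on \<phi> (?f ` V)"
  proof
    assume inj: "inj_on \<phi> (?f ` V)"
    have "?h a = ?h b"
      using assms component_eq_iff[of a V b] connected_by_edge[of a b "insert {a, b} X"] by auto
    then have "\<phi> (?f a) = \<phi> (?f b)" using h_factor assms by metis
    then have "?f a = ?f b" using inj assms by (auto dest: inj_onD)
    then show False using assms component_eq_iff[of a V b] by auto
  qed
  then have "card (\<phi> ` ?f ` V) < card (?f ` V)"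
    using finite_vertices card_image_le[of "?f ` V" \<phi>] inj_on_iff_eq_card[of "?f ` V" \<phi>]
    by (simp add: order_less_le)
  ultimately show ?thesis unfolding num_components_def by simp
qed

lemma num_components_le_add_card:
  assumes "finite Y" "Y \<subseteq> E"
  shows "num_components V X \<le> num_components V (X \<union> Y) + card Y"
  using assms
proof (induction Y rule: finite_induct)
  case empty
  then show ?case by simp
next
  case (insert e Y)
  obtain a b where e: "e = {a, b}" "a \<in> V" "b \<in> V" using edgeE insert.prems by blast
  have "num_components V (X \<union> Y) \<le> num_components V (insert e (X \<union> Y)) + 1"
    using num_components_insert_ge e by blast
  then show ?case using insert by simp
qed

lemma card_le_num_components_add_card:
  assumes "X \<subseteq> E"
  shows "card V \<le> num_components V X + card X"
proof -
  have "finite X" using assms finite_edges finite_subset by blast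
  then have "num_components V {} \<le> num_components V ({} \<union> X) + card X"
    using assms by (rule num_components_le_add_card)
  then show ?thesis using num_components_empty by simp
qed

lemma forest_subset:
  assumes "forest V E J" "I \<subseteq> J"
  shows "forest V E I"
proof -
  have JE: "J \<subseteq> E" using assms(1) unfolding forest_def by blast
  have finJ: "finite J" using JE finite_edges finite_subset by blast
  have "num_components V I \<le> num_components V (I \<union> (J - I)) + card (J - I)"
    using num_components_le_add_card[of "J - I" I] JE finJ by auto
  moreover have "I \<union> (J - I) = J" using assms(2) by auto
  moreover have "card (J - I) = card J - card I"
    using assms(2) finJ by (simp add: card_Diff_subset finite_subset)
  moreover have "card I \<le> card J" using assms(2) finJ card_mono by blast
  moreover have "card V \<le> num_components V I + card I"
    using card_le_num_components_add_card assms(2) JE by blast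
  moreover have "num_components V J + card J = card V" using assms(1) unfolding forest_def by blast
  ultimately have "num_components V I + card I = card V" by simp
  then show ?thesis using assms(2) JE unfolding forest_def by blast
qed

lemma forest_insert:
  assumes "forest V E J" "{a, b} \<in> E" "\<not> connected_by J a b"
  shows "forest V E (insert {a, b} J)"
proof -
  have JE: "J \<subseteq> E" using assms(1) unfolding forest_def by blast
  have "finite J" using JE finite_edges finite_subset by blast
  moreover have "{a, b} \<notin> J" using connected_by_edge[of a b J] assms(3) by blast
  ultimately have "card (insert {a, b} J) = card J + 1" by simp
  moreover have "num_components V (insert {a, b} J) < num_components V J"
    using num_components_insert_less[OF edge_endpoints[OF assms(2)] assms(3)] .
  moreover have "card V \<le> num_components V (insert {a, b} J) + card (insert {a, b} J)"
    using card_le_num_components_add_card JE assms(2) by blast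
  moreover have "num_components V J + card J = card V" using assms(1) unfolding forest_def by blast
  ultimately show ?thesis using JE assms(2) unfolding forest_def by auto
qed

lemma forest_augment:
  assumes "forest V E I" "forest V E J" "card I < card J"
  shows "\<exists>e\<in>J - I. forest V E (insert e I)"
proof (rule ccontr)
  assume no_aug: "\<not> ?thesis"
  have I_connects_J: "connected_by I a b" if "{a, b} \<in> J" for a b
  proof (rule ccontr)
    assume "\<not> connected_by I a b"
    moreover have "{a, b} \<in> E" using assms(2) that unfolding forest_def by blast
    ultimately have "forest V E (insert {a, b} I)" using forest_insert[OF assms(1)] by blast
    moreover have "{a, b} \<notin> I" using connected_by_edge[of a b I] \<open>\<not> connected_by I a b\<close> by blast
    ultimately show False using no_aug that by blast
  qed
  have "num_components V I \<le> num_components V J"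
    unfolding num_components_def
  proof (rule card_image_le_if_factors[OF finite_vertices])
    fix u v assume uv: "u \<in> V" "v \<in> V" "component V J u = component V J v"
    then have "connected_by J u v" using component_eq_iff[OF uv(1,2)] by blast
    then have "connected_by I u v" using I_connects_J by (rule connected_by_subst)
    then show "component V I u = component V I v" using component_eq_iff[OF uv(1,2)] by blast
  qed
  then show False using assms unfolding forest_def by linarith
qed

lemma matroid_forest: "matroid E (forest V E)"
proof
  show "finite E" by (rule finite_edges)
  show "forest V E {}" by (simp add: forest_def num_components_empty)
  show "X \<subseteq> E" if "forest V E X" for X using that by (simp add: forest_def)
  show "forest V E Y" if "forest V E X" "Y \<subseteq> X" for X Y using that by (rule forest_subset)
  show "\<exists>e\<in>Y - X. forest V E (insert e X)" if "forest V E X" "forest V E Y" "card X < card Y" for X Y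
    using that by (rule forest_augment)
qed

lemma spans_forest_connected_by:
  assumes "forest V E J" "{a, b} \<in> E" "matroid.spans (forest V E) J {a, b}"
  shows "connected_by J a b"
proof (rule ccontr)
  assume "\<not> connected_by J a b"
  moreover from this have "{a, b} \<notin> J" using connected_by_edge[of a b J] by blast
  ultimately show False
    using assms forest_insert[OF assms(1,2)] unfolding matroid.spans_def[OF matroid_forest] by blast
qed

lemma exists_vertex_outside_component:
  assumes "num_components V X \<ge> 2" "v \<in> V"
  obtains w where "w \<in> V" "w \<notin> component V X v"
proof -
  have "\<exists>w\<in>V. w \<notin> component V X v"
  proof (rule ccontr)
    assume "\<not> (\<exists>w\<in>V. w \<notin> component V X v)"
    then have "connected_by X v u" if "u \<in> V" for u
      using that unfolding component_def by auto
    then have "component V X u = component V X v" if "u \<in> V" for u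
      using component_eq_iff[OF that assms(2)] connected_by_sym that by metis
    then have "component V X ` V = {component V X v}" using assms(2) by blast
    then show False using assms(1) unfolding num_components_def by simp
  qed
  then show ?thesis using that by blast
qed

lemma edge_cut_component_eq:
  assumes "\<And>a b. {a, b} \<in> A \<Longrightarrow> connected_by J a b"
  shows "edge_cut E (component V J v) = edge_cut (E - A) (component V J v)"
proof -
  have "e \<notin> A" if e_cut: "e \<in> edge_cut E (component V J v)" for e
  proof
    assume "e \<in> A"
    obtain a b where ab: "e = {a, b}" "a \<in> component V J v" "b \<notin> component V J v" "e \<in> E"
      using e_cut unfolding edge_cut_def by blast
    have "connected_by J v a" using ab(2) unfolding component_def by simp
    moreover have "connected_by J a b" using assms[of a b] \<open>e \<in> A\<close> ab(1) by simp
    ultimately have "connected_by J v b" by (rule connected_by_trans)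
    moreover have "b \<in> V" using edge_endpoints[of a b] ab(1,4) by blast
    ultimately show False using ab(3) unfolding component_def by blast
  qed
  then show ?thesis unfolding edge_cut_def by blast
qed

lemma card_edge_cut_component_ge:
  assumes "edge_connected m V E" "\<And>a b. {a, b} \<in> A \<Longrightarrow> connected_by J a b"
    and "num_components V J \<ge> 2" "v \<in> V"
  shows "m \<le> card (edge_cut (E - A) (component V J v))"
proof -
  obtain w where "w \<in> V" "w \<notin> component V J v"
    using exists_vertex_outside_component[OF assms(3,4)] .
  then have "m \<le> card (edge_cut E (component V J v))"
    using edge_connected_le_card_edge_cut[OF assms(1,4) mem_component[OF assms(4)]] by blast
  then show ?thesis using edge_cut_component_eq[OF assms(2)] by simp
qed

lemma forest_card_le: "V \<noteq> {} \<Longrightarrow> forest V E F \<Longrightarrow> card F \<le> card V - 1"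
  using num_components_pos[of F] unfolding forest_def by linarith

text \<open>Each component of \<open>J\<close> has at least \<open>2 K\<close> cut edges, all outside \<open>A\<close>, and each edge is
  counted at most twice; this is the Nash-Williams--Tutte partition bound.\<close>

lemma forest_rank_bound:
  assumes "edge_connected (2 * K) V E" "forest V E J" "A \<subseteq> E"
    and "\<And>a b. {a, b} \<in> A \<Longrightarrow> connected_by J a b"
  shows "K * (card V - 1) \<le> card (E - A) + K * card J"
proof -
  define c where "c = num_components V J"
  have c_card: "c + card J = card V" using assms(2) unfolding forest_def c_def by blast
  show ?thesis
  proof (cases "c \<le> 1")
    case True
    then have "card V - 1 \<le> card J" using c_card by linarith
    then have "K * (card V - 1) \<le> K * card J" by (rule mult_le_mono2)
    then show ?thesis by linarith
  next
    case False
    let ?\<C> = "component V J ` V"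
    have "2 * K \<le> card (edge_cut (E - A) C)" if "C \<in> ?\<C>" for C
      using that card_edge_cut_component_ge[OF assms(1,4)] False unfolding c_def by auto
    then have "(\<Sum>C\<in>?\<C>. 2 * K) \<le> (\<Sum>C\<in>?\<C>. card (edge_cut (E - A) C))"
      by (rule sum_mono)
    also have "\<dots> \<le> 2 * card (E - A)"
      using finite_vertices finite_edges pairwise_disjnt_components
      by (intro sum_card_edge_cut_le) auto
    finally have "K * c \<le> card (E - A)"
      unfolding c_def num_components_def by (simp add: mult.commute)
    moreover have "K * card V = K * c + K * card J" using c_card add_mult_distrib2 by metis
    moreover have "K * (card V - 1) \<le> K * card V" by simp
    ultimately show ?thesis by linarith
  qed
qed

lemma forest_card_edges_within_less:
  assumes "forest V E F" "Y \<subseteq> F" "W \<subseteq> V" "W \<noteq> {}" "\<forall>e\<in>Y. e \<subseteq> W"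
  shows "card Y < card W"
proof -
  have Y_forest: "num_components V Y + card Y = card V"
    using forest_subset[OF assms(1,2)] unfolding forest_def by blast
  have singleton: "component V Y v = {v}" if "v \<in> V - W" for v
  proof -
    have "u = v" if "connected_by Y v u" for u
      using that unfolding connected_by_def
    proof (cases rule: converse_rtranclpE)
      case (step y)
      then have "{v, y} \<subseteq> W" using assms(5) by blast
      then show ?thesis using \<open>v \<in> V - W\<close> by blast
    qed simp
    then show ?thesis using that mem_component[of v V Y] unfolding component_def by blast
  qed
  obtain w where w: "w \<in> W" using assms(4) by blast
  then have "w \<in> V" using assms(3) by blast
  let ?\<C> = "insert (component V Y w) ((\<lambda>v. {v}) ` (V - W))"
  have "component V Y w \<notin> (\<lambda>v. {v}) ` (V - W)"
    using mem_component[OF \<open>w \<in> V\<close>, of Y] w by auto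
  then have "card ?\<C> = card (V - W) + 1"
    using finite_vertices by (simp add: card_image)
  moreover have "?\<C> \<subseteq> component V Y ` V" using singleton \<open>w \<in> V\<close> by blast
  then have "card ?\<C> \<le> num_components V Y"
    unfolding num_components_def using finite_vertices by (intro card_mono) auto
  moreover have "card (V - W) = card V - card W"
    using assms(3) finite_vertices by (simp add: card_Diff_subset finite_subset)
  moreover have "card W \<le> card V" using finite_vertices assms(3) by (rule card_mono)
  ultimately show ?thesis using Y_forest by linarith
qed

lemma tight22_Un_spanning_forests:
  assumes "V \<noteq> {}" "forest V E F1" "forest V E F2" "F1 \<inter> F2 = {}"
    and "card F1 = card V - 1" "card F2 = card V - 1"
  shows "tight22 V (F1 \<union> F2)"
  unfolding tight22_def sparse22_def
proof (intro conjI allI impI)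
  fix W F' assume "W \<subseteq> V \<and> F' \<subseteq> F1 \<union> F2 \<and> (\<forall>e\<in>F'. e \<subseteq> W)"
  then have W: "W \<subseteq> V" and F': "F' \<subseteq> F1 \<union> F2" "\<forall>e\<in>F'. e \<subseteq> W" by blast+
  show "int (card F') \<le> max (2 * int (card W) - 2) 0"
  proof (cases "W = {}")
    case True
    have "e \<noteq> {}" if "e \<in> F'" for e
      using that F'(1) assms(2,3) edgeE[of e] unfolding forest_def by blast
    then have "F' = {}" using F'(2) True by blast
    then show ?thesis by simp
  next
    case False
    have "card (F' \<inter> F1) < card W" "card (F' \<inter> F2) < card W"
      using forest_card_edges_within_less[OF _ _ W False] assms(2,3) F'(2) by auto
    moreover have "card F' \<le> card (F' \<inter> F1) + card (F' \<inter> F2)"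
      using card_Un_le[of "F' \<inter> F1" "F' \<inter> F2"] F'(1) by (simp add: Int_absorb2 flip: Int_Un_distrib)
    ultimately show ?thesis by linarith
  qed
next
  have "card (F1 \<union> F2) = card F1 + card F2"
    using assms(2,3,4) finite_edges finite_subset unfolding forest_def
    by (intro card_Un_disjoint) auto
  moreover have "card V \<ge> 1" using assms(1) finite_vertices by (simp add: Suc_le_eq card_gt_0_iff)
  ultimately show "int (card (F1 \<union> F2)) = 2 * int (card V) - 2" using assms(5,6) by simp
qed

theorem spanning_tree_packing:
  assumes "K \<ge> 1" "edge_connected (2 * K) V E"
  shows "\<exists>T. (\<forall>i<K. forest V E (T i) \<and> card (T i) = card V - 1) \<and>
    (\<forall>i<K. \<forall>j<K. i \<noteq> j \<longrightarrow> T i \<inter> T j = {})"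
proof -
  interpret M: matroid E "forest V E" by (rule matroid_forest)
  have "V \<noteq> {}" using assms(2) unfolding edge_connected_def connected_graph_def by blast
  obtain T A J where T: "M.packing K T" and A: "A \<subseteq> E" and J: "forest V E J"
    and spans: "\<forall>e\<in>A. M.spans J e" and size: "card (E - A) + K * card J \<le> M.packing_size K T"
    using M.packing_spanning_certificate[OF assms(1)] by blast
  have "connected_by J a b" if "{a, b} \<in> A" for a b
    using spans_forest_connected_by[OF J] that A spans by blast
  then have "K * (card V - 1) \<le> card (E - A) + K * card J"
    by (rule forest_rank_bound[OF assms(2) J A])
  then have "K * (card V - 1) \<le> M.packing_size K T" using size by linarith
  have T_le: "card (T i) \<le> card V - 1" if "i < K" for i
    using forest_card_le[OF \<open>V \<noteq> {}\<close>] T that unfolding M.packing_def by blast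
  have "card (T i) = card V - 1" if "i < K" for i
  proof (rule ccontr)
    assume "card (T i) \<noteq> card V - 1"
    then have "M.packing_size K T < (\<Sum>j<K. card V - 1)"
      unfolding M.packing_size_def using T_le that
      by (intro sum_strict_mono_ex1) (auto intro!: bexI[of _ i] simp: le_neq_implies_less)
    then show False using \<open>K * (card V - 1) \<le> M.packing_size K T\<close> by simp
  qed
  then show ?thesis using T unfolding M.packing_def by blast
qed

end

theorem mainTheorem9:
  fixes V :: "'a set" and E :: "'a set set" and k :: nat
  assumes "k \<ge> 1"
    and "simple_graph V E"
    and "edge_connected (4 * k) V E"
  shows "\<exists>T :: nat \<Rightarrow> 'a set set.
           (\<forall>i<k. T i \<subseteq> E \<and> tight22 V (T i)) \<and>
           (\<forall>i<k. \<forall>j<k. i \<noteq> j \<longrightarrow> T i \<inter> T j = {})"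
proof -
  have "V \<noteq> {}" using assms(3) unfolding edge_connected_def connected_graph_def by blast
  have "2 * k \<ge> 1" "edge_connected (2 * (2 * k)) V E" using assms(1,3) by (simp_all add: mult.assoc)
  then obtain T where T: "\<forall>i<2 * k. forest V E (T i) \<and> card (T i) = card V - 1"
    and disjoint: "\<forall>i<2 * k. \<forall>j<2 * k. i \<noteq> j \<longrightarrow> T i \<inter> T j = {}"
    using spanning_tree_packing[OF assms(2)] by blast
  define P where "P i = T (2 * i) \<union> T (2 * i + 1)" for i
  have "P i \<subseteq> E \<and> tight22 V (P i)" if "i < k" for i
  proof -
    have "2 * i < 2 * k" "2 * i + 1 < 2 * k" using that by auto
    then have "forest V E (T (2 * i))" "forest V E (T (2 * i + 1))" "T (2 * i) \<inter> T (2 * i + 1) = {}"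
      "card (T (2 * i)) = card V - 1" "card (T (2 * i + 1)) = card V - 1"
      using T disjoint by auto
    then show ?thesis
      using tight22_Un_spanning_forests[OF assms(2) \<open>V \<noteq> {}\<close>] unfolding P_def forest_def by blast
  qed
  moreover have "P i \<inter> P j = {}" if "i < k" "j < k" "i \<noteq> j" for i j
    using disjoint that unfolding P_def by (simp add: Int_Un_distrib Int_Un_distrib2)
  ultimately show ?thesis by blast
qed

end
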